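(* Let $O$ be an order with property (itov) such that its neighbourhood order $N(O)$ contains no infinite strictly decreasing sequence, and let $\alpha$ be the order type of a well-ordered linear extension of $N(O)$. Then $O$ has a total binary questionable representation of length at most $2\cdot\alpha+1$ (ordinal product: $\alpha$ copies of $2$); more precisely, an order embedding of $O$ into $\mathrm{Next}(2,2\cdot\alpha+1,(O^{0,1})_{2\cdot\alpha+1})$.
   Context: Orders are partial orders; $x\sim y$ means $x\ne y$ and $x,y$ incomparable. $O_{obs1}$ is the order on $\{a,b,c,d\}$ whose only comparabilities are $a<b$, $c<d$; $O_{obs2}$ is the order on $\{a,b,c,d\}$ whose only comparabilities are $a<b$, $c<d$, $c<b$. An order has property (itov) iff it has no induced suborder isomorphic to $O_{obs1}$ or $O_{obs2}$. For $x$ let $D(x)=\{z:z<x\}$, $U(x)=\{z:z>x\}$. The neighbourhood order $N(O)$ has the same domain as $O$ with $x<_{N(O)}y$ iff $D(x)\subseteq D(y)$, $U(x)\subseteq U(y)$ and at least one of these inclusions is strict. $O^{0,1}$ is the two-element total order $0<1$. For an ordinal $j$, $\mathcal O_j=(O_k)_{k<j}$ is a sequence of orders; $(O')_j$ is the constant sequence. A word of length $\ell\le j$ is a sequence $(x_k)_{k<\ell}$ with $x_k\in\mathrm{Dom}(O_k)$. The question of two words $X,Y$ is $(k,x_k,y_k)$ for the least $k<\min(\mathrm{len}X,\mathrm{len}Y)$ with $x_k\neq y_k$, if it exists. $\mathrm{Next}(i,j,\mathcal O_j)$ ($i<j$) is the partial order on all words of length $\ell$ with $i\le \ell<j$ where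 $X<Y$ iff they have a question $(k,x_k,y_k)$ with $x_k<y_k$ in $O_k$, and words without a question or with question items incomparable are incomparable. A questionable representation of $O$ is an injective map $f$ into some $\mathrm{Next}(i,j,\mathcal O_j)$ with $f(x)<f(y)\iff x<y$; its length is $j$, its width the supremum of $|\mathrm{Dom}(O_k)|$; it is total if all $O_k$ are total orders, binary if total of width 2. *)

theory Defs
  imports Main
begin

definition strict_order_on :: "'a set \<Rightarrow> ('a \<Rightarrow> 'a \<Rightarrow> bool) \<Rightarrow> bool" where
  "strict_order_on X lt \<longleftrightarrow>
     (\<forall>x\<in>X. \<not> lt x x) \<and>
     (\<forall>x\<in>X. \<forall>y\<in>X. \<forall>z\<in>X. lt x y \<longrightarrow> lt y z \<longrightarrow> lt x z)"

definition incomp :: "('a \<Rightarrow> 'a \<Rightarrow> bool) \<Rightarrow> 'a \<Rightarrow> 'a \<Rightarrow> bool" where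
  "incomp lt x y \<longleftrightarrow> x \<noteq> y \<and> \<not> lt x y \<and> \<not> lt y x"

definition induced_obs1 :: "('a \<Rightarrow> 'a \<Rightarrow> bool) \<Rightarrow> 'a \<Rightarrow> 'a \<Rightarrow> 'a \<Rightarrow> 'a \<Rightarrow> bool" where
  "induced_obs1 lt a b c d \<longleftrightarrow>
     a \<noteq> b \<and> c \<noteq> d \<and> lt a b \<and> \<not> lt b a \<and> lt c d \<and> \<not> lt d c \<and>
     incomp lt a c \<and> incomp lt a d \<and> incomp lt b c \<and> incomp lt b d"

definition induced_obs2 :: "('a \<Rightarrow> 'a \<Rightarrow> bool) \<Rightarrow> 'a \<Rightarrow> 'a \<Rightarrow> 'a \<Rightarrow> 'a \<Rightarrow> bool" where
  "induced_obs2 lt a b c d \<longleftrightarrow>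
     a \<noteq> b \<and> c \<noteq> d \<and> c \<noteq> b \<and>
     lt a b \<and> \<not> lt b a \<and> lt c d \<and> \<not> lt d c \<and> lt c b \<and> \<not> lt b c \<and>
     incomp lt a c \<and> incomp lt a d \<and> incomp lt b d"

definition itov :: "'a set \<Rightarrow> ('a \<Rightarrow> 'a \<Rightarrow> bool) \<Rightarrow> bool" where
  "itov X lt \<longleftrightarrow>
     \<not> (\<exists>a\<in>X. \<exists>b\<in>X. \<exists>c\<in>X. \<exists>d\<in>X. induced_obs1 lt a b c d \<or> induced_obs2 lt a b c d)"

definition downset :: "'a set \<Rightarrow> ('a \<Rightarrow> 'a \<Rightarrow> bool) \<Rightarrow> 'a \<Rightarrow> 'a set" where
  "downset X lt x = {z \<in> X. lt z x}"

definition upset :: "'a set \<Rightarrow> ('a \<Rightarrow> 'a \<Rightarrow> bool) \<Rightarrow> 'a \<Rightarrow> 'a set" where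
  "upset X lt x = {z \<in> X. lt x z}"

definition N_less :: "'a set \<Rightarrow> ('a \<Rightarrow> 'a \<Rightarrow> bool) \<Rightarrow> 'a \<Rightarrow> 'a \<Rightarrow> bool" where
  "N_less X lt x y \<longleftrightarrow>
     downset X lt x \<subseteq> downset X lt y \<and> upset X lt x \<subseteq> upset X lt y \<and>
     (downset X lt x \<noteq> downset X lt y \<or> upset X lt x \<noteq> upset X lt y)"

text \<open>Index positions of the ordinal 2*alpha+1, where alpha is the order type of the
  well-order W on X: position Some (x, i) (i = False, True) for the two copies of x,
  ordered lexicographically with x major, and None for the final (top) position.\<close>
definition idx_set :: "'a set \<Rightarrow> ('a \<times> bool) option set" where
  "idx_set X = Some ` (X \<times> UNIV) \<union> {None}"

fun idx_less :: "('a \<times> 'a) set \<Rightarrow> ('a \<times> bool) option \<Rightarrow> ('a \<times> bool) option \<Rightarrow> bool" where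
  "idx_less W (Some (x, i)) (Some (y, j)) \<longleftrightarrow>
     ((x, y) \<in> W \<and> x \<noteq> y) \<or> (x = y \<and> \<not> i \<and> j)"
| "idx_less W (Some _) None \<longleftrightarrow> True"
| "idx_less W None _ \<longleftrightarrow> False"

text \<open>Words: partial maps from an initial segment {k. k < a} of the index set
  (a in the index set, so the length is < j) into the value domains.
  Next(2, j, ...) consists of words of length at least 2 and less than j.\<close>
definition next2_words :: "'i set \<Rightarrow> ('i \<Rightarrow> 'i \<Rightarrow> bool) \<Rightarrow> ('i \<Rightarrow> 'v set) \<Rightarrow> ('i \<rightharpoonup> 'v) set" where
  "next2_words I ilt V =
     {w. (\<exists>a\<in>I. dom w = {k \<in> I. ilt k a}) \<and>
         (\<exists>p q. p \<noteq> q \<and> p \<in> dom w \<and> q \<in> dom w) \<and>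
         (\<forall>k\<in>dom w. the (w k) \<in> V k)}"

text \<open>v < w in Next iff their question (k, v_k, w_k) exists (least common index where
  they differ) and v_k < w_k in O_k.\<close>
definition next_less :: "('i \<Rightarrow> 'i \<Rightarrow> bool) \<Rightarrow> ('i \<Rightarrow> 'v \<Rightarrow> 'v \<Rightarrow> bool) \<Rightarrow> ('i \<rightharpoonup> 'v) \<Rightarrow> ('i \<rightharpoonup> 'v) \<Rightarrow> bool" where
  "next_less ilt vlt v w \<longleftrightarrow>
     (\<exists>k. k \<in> dom v \<and> k \<in> dom w \<and> v k \<noteq> w k \<and>
          (\<forall>p. ilt p k \<longrightarrow> v p = w p) \<and>
          vlt k (the (v k)) (the (w k)))"

definition O01_less :: "bool \<Rightarrow> bool \<Rightarrow> bool" where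
  "O01_less a b \<longleftrightarrow> \<not> a \<and> b"

end

theory Submission
  imports Defs
begin

text \<open>
  Fix the well-order \<open>W\<close> extending \<open>N(O)\<close>. The word of \<open>x\<close> has length \<open>2x + 2\<close>
  (counted in \<open>W\<close>): for every \<open>w \<le>\<^sub>W x\<close> it has the letter \<open>[w < x]\<close> at position \<open>2w\<close>
  and the letter \<open>[\<not> x < w]\<close> at position \<open>2w + 1\<close>. Both letters are monotone in \<open>x\<close>, so whenever \<open>x < y\<close> the first letter
  in which the words of \<open>x\<close> and \<open>y\<close> differ is 0 for \<open>x\<close> and 1 for \<open>y\<close>. Conversely, if
  \<open>x\<close> and \<open>y\<close> are incomparable, no common \<open>W\<close>-lower bound \<open>w\<close> relates differently to
  them: by (itov) such a \<open>w\<close> would be strictly above \<open>x\<close> or \<open>y\<close> in \<open>N(O)\<close>, hence also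
  \<open>W\<close>-above it. So one of the two words is a prefix of the other, and they have no
  question.
\<close>

locale itov_order =
  fixes X :: "'a set" and lt :: "'a \<Rightarrow> 'a \<Rightarrow> bool"
  assumes strict_order: "strict_order_on X lt" and itov: "itov X lt"
begin

lemma lt_irrefl: "x \<in> X \<Longrightarrow> \<not> lt x x"
  using strict_order by (simp add: strict_order_on_def)

lemma lt_trans: "\<lbrakk>x \<in> X; y \<in> X; z \<in> X; lt x y; lt y z\<rbrakk> \<Longrightarrow> lt x z"
  using strict_order unfolding strict_order_on_def by blast

lemma no_obs1: "\<lbrakk>a \<in> X; b \<in> X; c \<in> X; d \<in> X\<rbrakk> \<Longrightarrow> \<not> induced_obs1 lt a b c d"
  using itov unfolding itov_def by blast

lemma no_obs2: "\<lbrakk>a \<in> X; b \<in> X; c \<in> X; d \<in> X\<rbrakk> \<Longrightarrow> \<not> induced_obs2 lt a b c d"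
  using itov unfolding itov_def by blast

lemma itov_order_converse: "itov_order X (\<lambda>x y. lt y x)"
proof
  show "strict_order_on X (\<lambda>x y. lt y x)"
    using lt_irrefl lt_trans unfolding strict_order_on_def by blast
  have "induced_obs1 (\<lambda>x y. lt y x) a b c d \<Longrightarrow> induced_obs1 lt b a d c"
    and "induced_obs2 (\<lambda>x y. lt y x) a b c d \<Longrightarrow> induced_obs2 lt d c b a" for a b c d
    by (auto simp: induced_obs1_def induced_obs2_def incomp_def)
  then show "itov X (\<lambda>x y. lt y x)"
    using no_obs1 no_obs2 unfolding itov_def by blast
qed

lemma upset_subset_of_separating_below:
  assumes "x \<in> X" "y \<in> X" "w \<in> X" "incomp lt x y" "lt w y" "\<not> lt w x"
  shows "upset X lt x \<subseteq> upset X lt w"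
proof
  have inc: "x \<noteq> y" "\<not> lt x y" "\<not> lt y x" and "\<not> lt x w"
    using assms lt_trans[of x w y] by (auto simp: incomp_def)
  fix u assume "u \<in> upset X lt x"
  then have u: "u \<in> X" "lt x u" by (auto simp: upset_def)
  show "u \<in> upset X lt w"
  proof (rule ccontr)
    assume "u \<notin> upset X lt w"
    then have "\<not> lt w u" using u by (simp add: upset_def)
    then have "induced_obs1 lt x u w y"
      unfolding induced_obs1_def incomp_def
      using assms(1-3,5,6) inc u \<open>\<not> lt x w\<close> lt_irrefl lt_trans by metis
    then show False using no_obs1 assms u by blast
  qed
qed

lemma downset_subset_of_separating_below:
  assumes "x \<in> X" "y \<in> X" "w \<in> X" "incomp lt x y" "lt w y" "\<not> lt w x"
  shows "downset X lt x \<subseteq> downset X lt w"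
proof
  have inc: "x \<noteq> y" "\<not> lt x y" "\<not> lt y x" and "\<not> lt x w"
    using assms lt_trans[of x w y] by (auto simp: incomp_def)
  fix c assume "c \<in> downset X lt x"
  then have c: "c \<in> X" "lt c x" by (auto simp: downset_def)
  show "c \<in> downset X lt w"
  proof (rule ccontr)
    assume "c \<notin> downset X lt w"
    then have "\<not> lt c w" using c by (simp add: downset_def)
    consider "\<not> lt c y" | "lt c y" by blast
    then show False
    proof cases
      case 1
      then have "induced_obs1 lt c x w y"
        unfolding induced_obs1_def incomp_def
        using assms(1-3,5,6) inc c \<open>\<not> lt c w\<close> \<open>\<not> lt x w\<close> lt_irrefl lt_trans by metis
      then show False using no_obs1 assms c by blast
    next
      case 2
      then have "induced_obs2 lt w y c x"
        unfolding induced_obs2_def incomp_def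
        using assms(1-3,5,6) inc c \<open>\<not> lt c w\<close> \<open>\<not> lt x w\<close> lt_irrefl lt_trans by metis
      then show False using no_obs2 assms c by blast
    qed
  qed
qed

lemma N_less_of_separating_below:
  assumes "x \<in> X" "y \<in> X" "w \<in> X" "incomp lt x y" "lt w y" "\<not> lt w x"
  shows "N_less X lt x w"
proof -
  have "y \<in> upset X lt w" "y \<notin> upset X lt x"
    using assms by (auto simp: upset_def incomp_def)
  then show ?thesis
    using upset_subset_of_separating_below[OF assms] downset_subset_of_separating_below[OF assms]
    unfolding N_less_def by blast
qed

lemma N_less_of_separating_above:
  assumes "x \<in> X" "y \<in> X" "w \<in> X" "incomp lt x y" "lt y w" "\<not> lt x w"
  shows "N_less X lt x w"
proof -
  have "downset X (\<lambda>x y. lt y x) = upset X lt" "upset X (\<lambda>x y. lt y x) = downset X lt"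
    by (auto simp: downset_def upset_def)
  then have "N_less X (\<lambda>x y. lt y x) = N_less X lt"
    by (auto simp: N_less_def fun_eq_iff)
  moreover have "incomp (\<lambda>x y. lt y x) x y"
    using assms(4) by (auto simp: incomp_def)
  ultimately show ?thesis
    using itov_order.N_less_of_separating_below[OF itov_order_converse] assms by metis
qed

end

lemma idx_segment_below_Some:
  assumes "underS W a \<subseteq> X"
  shows "{k \<in> idx_set X. idx_less W k (Some (a, False))} = Some ` (underS W a \<times> UNIV)"
proof (rule set_eqI)
  fix k
  show "k \<in> {k \<in> idx_set X. idx_less W k (Some (a, False))} \<longleftrightarrow>
        k \<in> Some ` (underS W a \<times> UNIV)"
  proof (cases k)
    case (Some p)
    then show ?thesis using assms by (cases p) (auto simp: idx_set_def underS_def)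
  qed simp
qed

lemma idx_segment_below_None: "{k \<in> idx_set X. idx_less W k None} = Some ` (X \<times> UNIV)"
proof (rule set_eqI)
  fix k
  show "k \<in> {k \<in> idx_set X. idx_less W k None} \<longleftrightarrow> k \<in> Some ` (X \<times> UNIV)"
    by (cases k) (auto simp: idx_set_def)
qed

definition rep_letter :: "('a \<Rightarrow> 'a \<Rightarrow> bool) \<Rightarrow> 'a \<Rightarrow> 'a \<Rightarrow> bool \<Rightarrow> bool" where
  "rep_letter lt x w i = (if i then \<not> lt x w else lt w x)"

definition rep_word ::
    "('a \<times> 'a) set \<Rightarrow> ('a \<Rightarrow> 'a \<Rightarrow> bool) \<Rightarrow> 'a \<Rightarrow> ('a \<times> bool) option \<rightharpoonup> bool" where
  "rep_word W lt x k =
     (case k of None \<Rightarrow> None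
      | Some (w, i) \<Rightarrow> if (w, x) \<in> W then Some (rep_letter lt x w i) else None)"

lemma dom_rep_word: "dom (rep_word W lt x) = Some ` (under W x \<times> UNIV)"
  by (auto simp: rep_word_def under_def split: option.splits if_splits)

lemma rep_word_Some: "(w, x) \<in> W \<Longrightarrow> rep_word W lt x (Some (w, i)) = Some (rep_letter lt x w i)"
  by (simp add: rep_word_def)

lemma (in itov_order) rep_letter_mono:
  assumes "x \<in> X" "y \<in> X" "w \<in> X" "lt x y" "rep_letter lt x w i"
  shows "rep_letter lt y w i"
  using assms lt_trans[of w x y] lt_trans[of x y w] by (auto simp: rep_letter_def split: if_splits)

locale itov_well_order = itov_order +
  fixes W :: "('a \<times> 'a) set"
  assumes well_order: "well_order_on X W"
    and N_less_in_W: "\<lbrakk>x \<in> X; y \<in> X; N_less X lt x y\<rbrakk> \<Longrightarrow> (x, y) \<in> W"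
begin

lemma Field_W: "Field W = X"
  using well_order_on_Field[OF well_order] by simp

sublocale W: wo_rel W
  using well_order well_order_on_Well_order unfolding wo_rel_def by blast

lemma W_in_X: "(x, y) \<in> W \<Longrightarrow> x \<in> X \<and> y \<in> X"
  using Field_W by (auto intro: FieldI1 FieldI2)

lemma W_refl: "x \<in> X \<Longrightarrow> (x, x) \<in> W"
  using W.REFL Field_W by (auto simp: refl_on_def)

lemma self_in_dom_rep_word: "x \<in> X \<Longrightarrow> Some (x, i) \<in> dom (rep_word W lt x)"
  by (simp add: domIff rep_word_Some[OF W_refl])

lemma N_less_not_W_below:
  assumes "x \<in> X" "w \<in> X" "N_less X lt x w"
  shows "(w, x) \<notin> W"
proof
  assume "(w, x) \<in> W"
  then have "w = x"
    using N_less_in_W[OF assms] W.ANTISYM by (auto dest: antisymD)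
  then show False
    using assms(3) by (simp add: N_less_def)
qed

lemma common_W_lower_bound_not_separating:
  assumes "x \<in> X" "y \<in> X" "incomp lt x y" "(w, x) \<in> W" "(w, y) \<in> W"
  shows "(lt w x \<longleftrightarrow> lt w y) \<and> (lt x w \<longleftrightarrow> lt y w)"
proof (rule ccontr)
  have w: "w \<in> X" using assms(4) W_in_X by blast
  have "incomp lt y x" using assms(3) by (auto simp: incomp_def)
  assume "\<not> ?thesis"
  then consider "lt w y \<and> \<not> lt w x \<or> lt y w \<and> \<not> lt x w"
    | "lt w x \<and> \<not> lt w y \<or> lt x w \<and> \<not> lt y w" by blast
  then show False
  proof cases
    case 1
    then have "N_less X lt x w"
      using N_less_of_separating_below N_less_of_separating_above assms(1-3) w by blast
    then show False using N_less_not_W_below assms(1,4) w by blast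
  next
    case 2
    then have "N_less X lt y w"
      using N_less_of_separating_below N_less_of_separating_above assms(1,2) \<open>incomp lt y x\<close> w
      by blast
    then show False using N_less_not_W_below assms(2,5) w by blast
  qed
qed

lemma rep_word_initial_segment:
  assumes "x \<in> X"
  shows "\<exists>a\<in>idx_set X. dom (rep_word W lt x) = {k \<in> idx_set X. idx_less W k a}"
proof -
  have "W.ofilter (under W x)"
    by (rule W.under_ofilter)
  then consider a where "a \<in> X" "under W x = underS W a" | "under W x = X"
    using W.ofilter_underS_Field Field_W by blast
  then show ?thesis
  proof cases
    case 1
    then have "dom (rep_word W lt x) = {k \<in> idx_set X. idx_less W k (Some (a, False))}"
      using W_in_X by (subst idx_segment_below_Some) (auto simp: dom_rep_word underS_def)
    then show ?thesis using \<open>a \<in> X\<close> by (auto simp: idx_set_def)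
  next
    case 2
    then show ?thesis
      by (intro bexI[of _ None]) (auto simp: dom_rep_word idx_segment_below_None idx_set_def)
  qed
qed

lemma rep_word_in_next2_words:
  assumes "x \<in> X"
  shows "rep_word W lt x \<in> next2_words (idx_set X) (idx_less W) (\<lambda>_. UNIV)"
proof -
  have "\<exists>p q. p \<noteq> q \<and> p \<in> dom (rep_word W lt x) \<and> q \<in> dom (rep_word W lt x)"
    using self_in_dom_rep_word[OF assms]
    by (intro exI[of _ "Some (x, False)"] exI[of _ "Some (x, True)"]) simp
  with rep_word_initial_segment[OF assms] show ?thesis
    by (simp add: next2_words_def)
qed

lemma inj_on_rep_word: "inj_on (rep_word W lt) X"
proof
  fix x y assume "x \<in> X" "y \<in> X" and eq: "rep_word W lt x = rep_word W lt y"
  have "(x, y) \<in> W"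
    using self_in_dom_rep_word[OF \<open>x \<in> X\<close>] unfolding eq by (auto simp: dom_rep_word under_def)
  moreover have "(y, x) \<in> W"
    using self_in_dom_rep_word[OF \<open>y \<in> X\<close>] unfolding eq[symmetric]
    by (auto simp: dom_rep_word under_def)
  ultimately show "x = y"
    using W.ANTISYM by (auto dest: antisymD)
qed

lemma next_less_rep_word_imp_lt:
  assumes "x \<in> X" "y \<in> X"
    and "next_less (idx_less W) (\<lambda>_. O01_less) (rep_word W lt x) (rep_word W lt y)"
  shows "lt x y"
proof -
  obtain k where k: "k \<in> dom (rep_word W lt x)" "k \<in> dom (rep_word W lt y)"
    and less: "O01_less (the (rep_word W lt x k)) (the (rep_word W lt y k))"
    using assms(3) unfolding next_less_def by blast
  then obtain w i where k_eq: "k = Some (w, i)" and wx: "(w, x) \<in> W" and wy: "(w, y) \<in> W"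
    by (auto simp: dom_rep_word under_def)
  then have w: "w \<in> X" using W_in_X by blast
  have letters: "\<not> rep_letter lt x w i" "rep_letter lt y w i"
    using less by (simp_all add: k_eq rep_word_Some[OF wx] rep_word_Some[OF wy] O01_less_def)
  consider "lt x y" | "lt y x" | "x = y" | "incomp lt x y"
    by (auto simp: incomp_def)
  then show ?thesis
  proof cases
    case 1
    then show ?thesis .
  next
    case 2
    then show ?thesis using letters rep_letter_mono assms(1,2) w by blast
  next
    case 3
    then show ?thesis using letters by simp
  next
    case 4
    then have "rep_letter lt x w i = rep_letter lt y w i"
      using common_W_lower_bound_not_separating assms(1,2) wx wy by (simp add: rep_letter_def)
    then show ?thesis using letters by simp
  qed
qed

lemma lt_imp_next_less_rep_word:
  assumes "x \<in> X" "y \<in> X" "lt x y"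
  shows "next_less (idx_less W) (\<lambda>_. O01_less) (rep_word W lt x) (rep_word W lt y)"
proof -
  define sep where "sep = {w. (w, x) \<in> W \<and> (w, y) \<in> W \<and>
                            \<not> ((lt w x \<longleftrightarrow> lt w y) \<and> (lt x w \<longleftrightarrow> lt y w))}"
  define w0 where "w0 = W.minim sep"
  have sep_Field: "sep \<subseteq> Field W"
    using W_in_X Field_W by (auto simp: sep_def)
  have "x \<in> sep \<or> y \<in> sep"
    using W.TOTALS Field_W assms lt_irrefl by (auto simp: sep_def)
  then have "w0 \<in> sep"
    unfolding w0_def using W.minim_in[OF sep_Field] by blast
  then have wx: "(w0, x) \<in> W" and wy: "(w0, y) \<in> W" and w0: "w0 \<in> X"
    using W_in_X by (auto simp: sep_def)
  have below_w0_not_sep: "v \<notin> sep" if "(v, w0) \<in> W" "v \<noteq> w0" for v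
    using that W.minim_least[OF sep_Field] W.ANTISYM unfolding w0_def by (auto dest: antisymD)
  define i0 where "i0 = (lt w0 x \<longleftrightarrow> lt w0 y)"
  have agree: "rep_word W lt x p = rep_word W lt y p" if "idx_less W p (Some (w0, i0))" for p
  proof (cases p)
    case (Some q)
    obtain v j where q: "q = (v, j)" by fastforce
    show ?thesis
    proof (cases "v = w0")
      case True
      then show ?thesis
        using that Some q wx wy by (simp add: rep_word_Some rep_letter_def i0_def)
    next
      case False
      then have "(v, w0) \<in> W" using that Some q by simp
      then have "(v, x) \<in> W" "(v, y) \<in> W" "v \<notin> sep"
        using W.TRANS wx wy below_w0_not_sep False by (auto dest: transD)
      then show ?thesis
        using Some q by (simp add: rep_word_Some rep_letter_def sep_def)
    qed
  qed (simp add: rep_word_def)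
  have "rep_letter lt x w0 i0 \<noteq> rep_letter lt y w0 i0"
    using \<open>w0 \<in> sep\<close> by (auto simp: sep_def i0_def rep_letter_def)
  then have "\<not> rep_letter lt x w0 i0" "rep_letter lt y w0 i0"
    using rep_letter_mono assms w0 by blast+
  then show ?thesis
    unfolding next_less_def using agree wx wy
    by (intro exI[of _ "Some (w0, i0)"]) (simp add: domIff rep_word_Some O01_less_def)
qed

end

theorem theorem4p4:
  fixes X :: "'a set" and lt :: "'a \<Rightarrow> 'a \<Rightarrow> bool" and W :: "('a \<times> 'a) set"
  assumes "strict_order_on X lt"
    and "itov X lt"
    and "\<not> (\<exists>s :: nat \<Rightarrow> 'a. \<forall>n. s n \<in> X \<and> N_less X lt (s (Suc n)) (s n))"
    and "well_order_on X W"
    and "\<forall>x\<in>X. \<forall>y\<in>X. N_less X lt x y \<longrightarrow> (x, y) \<in> W"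
  shows "\<exists>f. inj_on f X \<and>
           f ` X \<subseteq> next2_words (idx_set X) (idx_less W) (\<lambda>_. UNIV) \<and>
           (\<forall>x\<in>X. \<forall>y\<in>X.
              next_less (idx_less W) (\<lambda>_. O01_less) (f x) (f y) \<longleftrightarrow> lt x y)"
proof -
  interpret itov_well_order X lt W
    using assms(1,2,4,5) by unfold_locales blast+
  have "rep_word W lt ` X \<subseteq> next2_words (idx_set X) (idx_less W) (\<lambda>_. UNIV)"
    using rep_word_in_next2_words by blast
  moreover have "\<forall>x\<in>X. \<forall>y\<in>X.
      next_less (idx_less W) (\<lambda>_. O01_less) (rep_word W lt x) (rep_word W lt y) \<longleftrightarrow> lt x y"
    using next_less_rep_word_imp_lt lt_imp_next_less_rep_word by blast
  ultimately show ?thesis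
    using inj_on_rep_word by blast
qed

end
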